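(* Let $\hat{H}=\sum_{j}h_j\hat{\gamma}_j$ be a Hamiltonian on a finite-dimensional Hilbert space, written as a finite sum where each $\hat{\gamma}_j$ is Hermitian with operator norm $\|\hat{\gamma}_j\|=1$ and each $h_j\in\mathbb{R}$. Let $G$ be its commutativity graph. Fix an arbitrary operator $\hat{B}$ and let $(\bar{\gamma}^B_i(t))_i$ be the solution of the linear system $$\dot{\bar{\gamma}}^B_{i}(t)=2\sum_{j:\langle ij\rangle\in G}|h_j|\,\bar{\gamma}^B_j(t),\qquad \bar{\gamma}^B_{i}(0)=\|[\hat{\gamma}_{i},\hat{B}]\|.$$ Then for every $t\ge 0$ and every vertex $i$, $$\|[\hat{\gamma}_i(t),\hat{B}]\|\le \bar{\gamma}^B_i(t).$$ Moreover, for every operator $\hat{A}$ and every $t\ge0$, $$\|[\hat{A}(t),\hat{B}]\|-\|[\hat{A},\hat{B}]\|\le \int_0^t\sum_{i\in S(\hat{A})}2\|\hat{A}\|\,|h_i|\,\bar{\gamma}^B_i(t')\,dt'.$$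
   Context: $\|\cdot\|$ denotes the operator norm and $\hat{X}(t)=e^{i\hat{H}t}\hat{X}e^{-i\hat{H}t}$ for any operator $\hat{X}$. The commutativity graph $G$ of the decomposition $\hat{H}=\sum_j h_j\hat{\gamma}_j$ has one vertex $j$ for each term $\hat{\gamma}_j$, and vertices $i\ne j$ are joined by an edge $\langle ij\rangle$ if and only if $[\hat{\gamma}_i,\hat{\gamma}_j]\neq 0$. For an operator $\hat{A}$, its support on the commutativity graph is $S(\hat{A})=\{i:[\hat{\gamma}_i,\hat{A}]\neq0\}$. *)

theory Defs
  imports "HOL-Analysis.Analysis"
begin

text \<open>Operators on the finite-dimensional Hilbert space complex^'n are complex
  matrices of type complex^'n^'n acting by matrix-vector multiplication.\<close>

definition opnorm :: "complex^'n^'n \<Rightarrow> real" where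
  "opnorm A = onorm (\<lambda>x. A *v x)"

definition adjoint :: "complex^'n^'n \<Rightarrow> complex^'n^'n" where
  "adjoint A = (\<chi> a b. cnj (A $ b $ a))"

definition comm :: "complex^'n^'n \<Rightarrow> complex^'n^'n \<Rightarrow> complex^'n^'n" where
  "comm A B = A ** B - B ** A"

definition cscale :: "complex \<Rightarrow> complex^'n^'n \<Rightarrow> complex^'n^'n" where
  "cscale c A = (\<chi> a b. c * A $ a $ b)"

fun mpow :: "complex^'n^'n \<Rightarrow> nat \<Rightarrow> complex^'n^'n" where
  "mpow A 0 = mat 1"
| "mpow A (Suc k) = A ** mpow A k"

definition mexp :: "complex^'n^'n \<Rightarrow> complex^'n^'n" where
  "mexp A = (\<Sum>k. (1 / fact k) *\<^sub>R mpow A k)"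

definition evol :: "complex^'n^'n \<Rightarrow> real \<Rightarrow> complex^'n^'n \<Rightarrow> complex^'n^'n" where
  "evol H t X = mexp (cscale (\<i> * complex_of_real t) H) ** X ** mexp (cscale (- \<i> * complex_of_real t) H)"

definition cedge :: "('j \<Rightarrow> complex^'n^'n) \<Rightarrow> 'j \<Rightarrow> 'j \<Rightarrow> bool" where
  "cedge \<gamma> i j \<longleftrightarrow> i \<noteq> j \<and> comm (\<gamma> i) (\<gamma> j) \<noteq> 0"

definition supp_cg :: "('j \<Rightarrow> complex^'n^'n) \<Rightarrow> complex^'n^'n \<Rightarrow> 'j set" where
  "supp_cg \<gamma> A = {i. comm (\<gamma> i) A \<noteq> 0}"

end

theory Submission
  imports Defs
begin

text \<open>For \<open>C(t) = [X(t), B]\<close> the Jacobi identity gives \<open>C' = [A, C] + R\<close>, where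
  \<open>A = i \<Sum> h\<^sub>j \<gamma>\<^sub>j(t)\<close> is skew-Hermitian and \<open>R = - i \<Sum> h\<^sub>j [X(t), [\<gamma>\<^sub>j(t), B]]\<close>, both
  sums running over \<open>j \<in> S(X)\<close>. The term \<open>[A, C]\<close> only conjugates \<open>C\<close> by unitaries, so the
  upper right Dini derivative of \<open>\<parallel>C\<parallel>\<close> is at most
  \<open>\<parallel>R\<parallel> \<le> \<Sum> 2 \<parallel>X\<parallel> |h\<^sub>j| \<parallel>[\<gamma>\<^sub>j(t), B]\<parallel>\<close>. For \<open>X = \<gamma>\<^sub>i\<close> (where \<open>\<parallel>X\<parallel> = 1\<close> and
  \<open>S(X)\<close> is the neighbourhood of \<open>i\<close>) this is a cooperative linear differential inequality, and
  comparison with the linear system for \<open>\<gamma>\<^sup>B\<close> gives the first bound; integrating it for a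
  general \<open>X\<close> gives the second.\<close>

lemma norm_matrix_vector_le_opnorm: "norm (A *v x) \<le> opnorm A * norm x"
  for A :: "complex^'n^'n"
  unfolding opnorm_def by (rule onorm[OF matrix_vector_mul_bounded_linear])

lemma opnorm_le: "(\<And>x. norm (A *v x) \<le> b * norm x) \<Longrightarrow> opnorm A \<le> b"
  for A :: "complex^'n^'n"
  unfolding opnorm_def by (rule onorm_le)

lemma norm_entry_le_opnorm: "norm (A $ a $ b) \<le> opnorm A"
  for A :: "complex^'n^'n"
proof -
  have "norm (axis b (1::complex)) = 1"
    by (simp add: norm_Basis)
  moreover have "(A *v axis b 1) $ a = A $ a $ b"
    by (simp add: matrix_vector_mult_def axis_def if_distrib cong: if_cong)
  ultimately show ?thesis
    using Finite_Cartesian_Product.norm_nth_le[of "A *v axis b 1" a] norm_matrix_vector_le_opnorm[of A "axis b 1"] by simp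
qed

lemma opnorm_le_sum_entries: "opnorm A \<le> (\<Sum>a\<in>UNIV. \<Sum>b\<in>UNIV. norm (A $ a $ b))"
  for A :: "complex^'n^'n"
proof (rule opnorm_le)
  fix x :: "complex^'n"
  have "norm (A *v x) \<le> (\<Sum>a\<in>UNIV. norm ((A *v x) $ a))"
    by (simp add: norm_vec_def L2_set_le_sum)
  also have "\<dots> \<le> (\<Sum>a\<in>UNIV. \<Sum>b\<in>UNIV. norm (A $ a $ b) * norm x)"
  proof (rule sum_mono)
    fix a
    have "norm ((A *v x) $ a) \<le> (\<Sum>b\<in>UNIV. norm (A $ a $ b * x $ b))"
      unfolding matrix_vector_mult_def by (simp add: norm_sum)
    also have "\<dots> \<le> (\<Sum>b\<in>UNIV. norm (A $ a $ b) * norm x)"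
      by (intro sum_mono) (simp add: norm_mult mult_left_mono Finite_Cartesian_Product.norm_nth_le)
    finally show "norm ((A *v x) $ a) \<le> (\<Sum>b\<in>UNIV. norm (A $ a $ b) * norm x)" .
  qed
  finally show "norm (A *v x) \<le> (\<Sum>a\<in>UNIV. \<Sum>b\<in>UNIV. norm (A $ a $ b)) * norm x"
    by (simp add: sum_distrib_right)
qed

lemma opnorm_eq_0_iff: "opnorm A = 0 \<longleftrightarrow> A = 0"
  for A :: "complex^'n^'n"
proof
  assume "opnorm A = 0"
  then show "A = 0"
    using norm_entry_le_opnorm[of A] by (simp add: vec_eq_iff)
next
  assume "A = 0"
  moreover have "(\<lambda>x. (0::complex^'n^'n) *v x) = (\<lambda>x. 0)"
    by simp
  ultimately show "opnorm A = 0"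
    unfolding opnorm_def by (metis onorm_zero)
qed

lemma opnorm_add_le: "opnorm (A + B) \<le> opnorm A + opnorm B"
  unfolding opnorm_def
  using onorm_triangle[OF matrix_vector_mul_bounded_linear matrix_vector_mul_bounded_linear, of A B]
  by (simp add: matrix_vector_mult_add_rdistrib[abs_def])

lemma scaleR_matrix_vector: "(r *\<^sub>R A) *v x = r *\<^sub>R (A *v x)"
  for A :: "complex^'n^'n"
  by (simp add: matrix_vector_mult_def vec_eq_iff scaleR_sum_right)

lemma opnorm_scaleR: "opnorm (r *\<^sub>R A) = \<bar>r\<bar> * opnorm A"
  for A :: "complex^'n^'n"
  unfolding opnorm_def scaleR_matrix_vector by (rule onorm_scaleR) simp

lemma opnorm_mult_le: "opnorm (A ** B) \<le> opnorm A * opnorm B"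
proof -
  have "(\<lambda>x. (A ** B) *v x) = (\<lambda>x. A *v x) \<circ> (\<lambda>x. B *v x)"
    by (auto simp: matrix_vector_mul_assoc)
  then show ?thesis
    unfolding opnorm_def
    using onorm_compose[OF matrix_vector_mul_bounded_linear matrix_vector_mul_bounded_linear] by simp
qed

lemma opnorm_mat_1: "opnorm (mat 1 :: complex^'n^'n) = 1"
proof -
  have "(\<lambda>x. (mat 1 :: complex^'n^'n) *v x) = (\<lambda>x. x)"
    by simp
  then show ?thesis
    unfolding opnorm_def by (metis onorm_id)
qed

section \<open>Matrices as a Banach algebra\<close>

text \<open>On \<^typ>\<open>complex^'n^'n\<close> the operation \<open>*\<close> is componentwise, so a copy of the
  matrices with \<open>**\<close> as product and \<^const>\<open>opnorm\<close> as norm is needed to use the library's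
  exponential.\<close>

typedef ('n::finite) cmat = "UNIV :: (complex^'n^'n) set"
  morphisms mat_of cmat_of by simp

setup_lifting type_definition_cmat

instantiation cmat :: (finite) ring_1
begin
lift_definition zero_cmat :: "'a cmat" is "0" .
lift_definition one_cmat :: "'a cmat" is "mat 1" .
lift_definition plus_cmat :: "'a cmat \<Rightarrow> 'a cmat \<Rightarrow> 'a cmat" is "(+)" .
lift_definition minus_cmat :: "'a cmat \<Rightarrow> 'a cmat \<Rightarrow> 'a cmat" is "(-)" .
lift_definition uminus_cmat :: "'a cmat \<Rightarrow> 'a cmat" is "uminus" .
lift_definition times_cmat :: "'a cmat \<Rightarrow> 'a cmat \<Rightarrow> 'a cmat" is "(**)" .
instance
proof
  fix a b c :: "'a cmat"
  show "a * b * c = a * (b * c)" by transfer (rule matrix_mul_assoc[symmetric])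
  show "1 * a = a" by transfer (rule matrix_mul_lid)
  show "a * 1 = a" by transfer (rule matrix_mul_rid)
  show "(a + b) * c = a * c + b * c"
    by transfer (simp add: matrix_matrix_mult_def vec_eq_iff sum.distrib distrib_right)
  show "a * (b + c) = a * b + a * c" by transfer (rule matrix_add_ldistrib)
  show "a + b + c = a + (b + c)" by transfer (rule add.assoc)
  show "a + b = b + a" by transfer (rule add.commute)
  show "0 + a = a" by transfer (rule add_0_left)
  show "- a + a = 0" by transfer (rule left_minus)
  show "a - b = a + - b" by transfer (rule diff_conv_add_uminus)
  show "(0::'a cmat) \<noteq> 1"
  proof transfer
    fix i :: 'a
    have "(mat 1 :: complex^'a^'a) $ i $ i = 1"
      by (simp add: mat_def)
    then show "(0::complex^'a^'a) \<noteq> mat 1"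
      by (metis zero_index zero_neq_one)
  qed
qed
end

instantiation cmat :: (finite) real_algebra_1
begin
lift_definition scaleR_cmat :: "real \<Rightarrow> 'a cmat \<Rightarrow> 'a cmat" is "scaleR" .
instance
proof
  fix a b :: real and x y :: "'a cmat"
  show "a *\<^sub>R (x + y) = a *\<^sub>R x + a *\<^sub>R y" by transfer (rule scaleR_add_right)
  show "(a + b) *\<^sub>R x = a *\<^sub>R x + b *\<^sub>R x" by transfer (rule scaleR_add_left)
  show "a *\<^sub>R b *\<^sub>R x = (a * b) *\<^sub>R x" by transfer (rule scaleR_scaleR)
  show "1 *\<^sub>R x = x" by transfer (rule scaleR_one)
  show "a *\<^sub>R x * y = a *\<^sub>R (x * y)" by transfer (rule scalar_matrix_assoc[symmetric])
  show "x * a *\<^sub>R y = a *\<^sub>R (x * y)" by transfer (simp add: matrix_scalar_ac scalar_matrix_assoc)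
qed
end

instantiation cmat :: (finite) real_normed_algebra_1
begin
lift_definition norm_cmat :: "'a cmat \<Rightarrow> real" is "opnorm" .
definition sgn_cmat :: "'a cmat \<Rightarrow> 'a cmat" where "sgn_cmat x = x /\<^sub>R norm x"
definition dist_cmat :: "'a cmat \<Rightarrow> 'a cmat \<Rightarrow> real" where "dist_cmat x y = norm (x - y)"
definition uniformity_cmat :: "('a cmat \<times> 'a cmat) filter" where
  "uniformity_cmat = (INF e\<in>{0 <..}. principal {(x, y). dist x y < e})"
definition open_cmat :: "'a cmat set \<Rightarrow> bool" where
  "open_cmat U = (\<forall>x\<in>U. \<forall>\<^sub>F (x', y) in uniformity. x' = x \<longrightarrow> y \<in> U)"
instance
proof
  fix a :: real and x y :: "'a cmat"
  show "norm x = 0 \<longleftrightarrow> x = 0" by transfer (rule opnorm_eq_0_iff)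
  show "norm (x + y) \<le> norm x + norm y" by transfer (rule opnorm_add_le)
  show "norm (a *\<^sub>R x) = \<bar>a\<bar> * norm x" by transfer (rule opnorm_scaleR)
  show "norm (x * y) \<le> norm x * norm y" by transfer (rule opnorm_mult_le)
  show "norm (1::'a cmat) = 1" by transfer (rule opnorm_mat_1)
qed (simp_all add: sgn_cmat_def dist_cmat_def uniformity_cmat_def open_cmat_def)
end

lemmas mat_of_cmat_simps [simp] =
  zero_cmat.rep_eq one_cmat.rep_eq plus_cmat.rep_eq minus_cmat.rep_eq times_cmat.rep_eq
  scaleR_cmat.rep_eq cmat_of_inverse

lemma cmat_of_ring_hom:
  "cmat_of (A + B) = cmat_of A + cmat_of B"
  "cmat_of (A - B) = cmat_of A - cmat_of B"
  "cmat_of (- A) = - cmat_of A"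
  "cmat_of (A ** B) = cmat_of A * cmat_of B"
  "cmat_of (r *\<^sub>R A) = r *\<^sub>R cmat_of A"
  by (simp_all add: plus_cmat.abs_eq minus_cmat.abs_eq uminus_cmat.abs_eq times_cmat.abs_eq
      scaleR_cmat.abs_eq)

lemma cmat_of_0 [simp]: "cmat_of 0 = 0"
  by (simp add: zero_cmat.abs_eq)

lemma cmat_of_sum: "cmat_of (\<Sum>j\<in>S. f j) = (\<Sum>j\<in>S. cmat_of (f j))"
  by (induction S rule: infinite_finite_induct) (simp_all add: cmat_of_ring_hom)

lemma norm_mat_of_le: "norm (mat_of x) \<le> norm (x :: 'n::finite cmat) * real CARD('n) ^ 2"
proof -
  have "norm (mat_of x) \<le> (\<Sum>a\<in>UNIV. norm (mat_of x $ a))"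
    by (simp add: norm_vec_def L2_set_le_sum)
  also have "\<dots> \<le> (\<Sum>a\<in>UNIV. \<Sum>b\<in>UNIV. norm (mat_of x $ a $ b))"
    by (intro sum_mono) (simp add: norm_vec_def L2_set_le_sum)
  also have "\<dots> \<le> (\<Sum>a\<in>(UNIV::'n set). \<Sum>b\<in>(UNIV::'n set). norm x)"
    by (intro sum_mono) (simp add: norm_entry_le_opnorm norm_cmat.rep_eq)
  finally show ?thesis by (simp add: power2_eq_square mult_ac)
qed

lemma norm_le_mat_of: "norm (x :: 'n::finite cmat) \<le> norm (mat_of x) * real CARD('n) ^ 2"
proof -
  have "norm x \<le> (\<Sum>a\<in>UNIV. \<Sum>b\<in>UNIV. norm (mat_of x $ a $ b))"
    by (simp add: opnorm_le_sum_entries norm_cmat.rep_eq)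
  also have "\<dots> \<le> (\<Sum>a\<in>(UNIV::'n set). \<Sum>b\<in>(UNIV::'n set). norm (mat_of x))"
    by (intro sum_mono order_trans[OF Finite_Cartesian_Product.norm_nth_le
          Finite_Cartesian_Product.norm_nth_le])
  finally show ?thesis by (simp add: power2_eq_square mult_ac)
qed

lemma bounded_linear_mat_of: "bounded_linear (mat_of :: 'n::finite cmat \<Rightarrow> _)"
  by (rule bounded_linear_intro[where K="real CARD('n) ^ 2"])
    (simp_all add: norm_mat_of_le)

lemma bounded_linear_cmat_of: "bounded_linear (cmat_of :: _ \<Rightarrow> 'n::finite cmat)"
  using norm_le_mat_of[of "cmat_of _ :: 'n cmat"]
  by (intro bounded_linear_intro[where K="real CARD('n) ^ 2"])
    (simp_all add: cmat_of_ring_hom)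

instance cmat :: (finite) banach
proof
  fix X :: "nat \<Rightarrow> 'a cmat"
  assume "Cauchy X"
  then have "Cauchy (\<lambda>n. mat_of (X n))"
    by (rule bounded_linear.Cauchy[OF bounded_linear_mat_of])
  then obtain L where "(\<lambda>n. mat_of (X n)) \<longlonglongrightarrow> L"
    using convergent_eq_Cauchy by blast
  then have "(\<lambda>n. cmat_of (mat_of (X n))) \<longlonglongrightarrow> cmat_of L"
    by (rule bounded_linear.tendsto[OF bounded_linear_cmat_of])
  then show "convergent X"
    by (auto simp: mat_of_inverse convergent_def)
qed

definition bracket :: "'a::ring \<Rightarrow> 'a \<Rightarrow> 'a" where
  "bracket X Y = X * Y - Y * X"

lemma bracket_jacobi: "bracket (bracket X Y) Z = bracket X (bracket Y Z) - bracket Y (bracket X Z)"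
  by (simp add: bracket_def algebra_simps)

lemma bracket_sum_left: "bracket (\<Sum>j\<in>S. f j) Y = (\<Sum>j\<in>S. bracket (f j) Y)"
  by (simp add: bracket_def sum_distrib_left sum_distrib_right sum_subtractf)

lemma bracket_sum_right: "bracket X (\<Sum>j\<in>S. f j) = (\<Sum>j\<in>S. bracket X (f j))"
  by (simp add: bracket_def sum_distrib_left sum_distrib_right sum_subtractf)

lemma bracket_scaleR_left: "bracket (r *\<^sub>R X) Y = r *\<^sub>R bracket X (Y::'a::real_algebra)"
  by (simp add: bracket_def scaleR_right_diff_distrib)

lemma bracket_scaleR_right: "bracket X (r *\<^sub>R Y) = r *\<^sub>R bracket X (Y::'a::real_algebra)"
  by (simp add: bracket_def scaleR_right_diff_distrib)

lemma norm_bracket_le: "norm (bracket X Y) \<le> 2 * norm X * norm (Y::'a::real_normed_algebra)"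
proof -
  have "norm (bracket X Y) \<le> norm (X * Y) + norm (Y * X)"
    unfolding bracket_def by (rule norm_triangle_ineq4)
  also have "\<dots> \<le> norm X * norm Y + norm Y * norm X"
    by (intro add_mono norm_mult_ineq)
  finally show ?thesis by simp
qed

text \<open>With \<open>K = i H\<close> this is the Heisenberg picture \<open>X(t) = e\<^sup>i\<^sup>H\<^sup>t X e\<^sup>-\<^sup>i\<^sup>H\<^sup>t\<close>.\<close>

definition heis_evol :: "'a::{real_normed_algebra_1,banach} \<Rightarrow> real \<Rightarrow> 'a \<Rightarrow> 'a" where
  "heis_evol K t Y = exp (t *\<^sub>R K) * Y * exp ((- t) *\<^sub>R K)"

lemma exp_scaleR_mult_exp_minus:
  "exp (t *\<^sub>R K) * exp ((- t) *\<^sub>R K) = 1"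
  "exp ((- t) *\<^sub>R K) * exp (t *\<^sub>R K) = 1"
  using exp_minus_inverse[of "t *\<^sub>R K"] exp_minus_inverse[of "- (t *\<^sub>R K)"] by simp_all

lemma heis_evol_0 [simp]: "heis_evol K 0 Y = Y"
  by (simp add: heis_evol_def)

lemma heis_evol_mult: "heis_evol K t (X * Y) = heis_evol K t X * heis_evol K t Y"
proof -
  have "heis_evol K t X * heis_evol K t Y
      = exp (t *\<^sub>R K) * X * (exp ((- t) *\<^sub>R K) * exp (t *\<^sub>R K)) * Y * exp ((- t) *\<^sub>R K)"
    unfolding heis_evol_def by (simp only: mult.assoc)
  then show ?thesis
    unfolding exp_scaleR_mult_exp_minus heis_evol_def by (simp add: mult.assoc)
qed

lemma heis_evol_diff: "heis_evol K t (X - Y) = heis_evol K t X - heis_evol K t Y"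
  by (simp add: heis_evol_def algebra_simps)

lemma heis_evol_bracket: "heis_evol K t (bracket X Y) = bracket (heis_evol K t X) (heis_evol K t Y)"
  by (simp add: bracket_def heis_evol_diff heis_evol_mult)

lemma heis_evol_scaleR: "heis_evol K t (r *\<^sub>R X) = r *\<^sub>R heis_evol K t X"
  by (simp add: heis_evol_def)

lemma heis_evol_sum: "heis_evol K t (\<Sum>j\<in>S. f j) = (\<Sum>j\<in>S. heis_evol K t (f j))"
  by (simp add: heis_evol_def sum_distrib_left sum_distrib_right)

lemma has_vector_derivative_heis_evol:
  "((\<lambda>t. heis_evol K t Y) has_vector_derivative heis_evol K t (bracket K Y)) (at t within S)"
proof -
  have "((\<lambda>t. exp (t *\<^sub>R K) * Y * exp (t *\<^sub>R (- K))) has_vector_derivative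
      exp (t *\<^sub>R K) * Y * (exp (t *\<^sub>R (- K)) * (- K))
        + (exp (t *\<^sub>R K) * 0 + exp (t *\<^sub>R K) * K * Y) * exp (t *\<^sub>R (- K))) (at t within S)"
    by (intro has_vector_derivative_mult exp_scaleR_has_vector_derivative_right
        has_vector_derivative_const)
  moreover have "exp (t *\<^sub>R (- K)) * (- K) = (- K) * exp (t *\<^sub>R (- K))"
    by (rule exp_times_scaleR_commute)
  ultimately show ?thesis
    by (simp add: heis_evol_def bracket_def algebra_simps)
qed

lemma norm_heis_evol_le:
  assumes "\<And>s. norm (exp (s *\<^sub>R K)) \<le> 1"
  shows "norm (heis_evol K t Y) \<le> norm Y"
proof -
  have "norm (heis_evol K t Y) \<le> norm (exp (t *\<^sub>R K) * Y) * norm (exp ((- t) *\<^sub>R K))"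
    unfolding heis_evol_def by (rule norm_mult_ineq)
  also have "\<dots> \<le> norm (exp (t *\<^sub>R K)) * norm Y * norm (exp ((- t) *\<^sub>R K))"
    by (intro mult_right_mono norm_mult_ineq norm_ge_zero)
  also have "\<dots> \<le> 1 * norm Y * 1"
    by (intro mult_mono assms) simp_all
  finally show ?thesis by simp
qed

lemma cmat_of_mpow: "cmat_of (mpow A k) = cmat_of A ^ k"
  by (induction k) (simp_all add: one_cmat.abs_eq cmat_of_ring_hom)

lemma mexp_eq_exp: "mexp A = mat_of (exp (cmat_of A :: 'n::finite cmat))"
proof -
  have "mat_of (exp (cmat_of A :: 'n cmat)) = (\<Sum>k. mat_of (cmat_of A ^ k /\<^sub>R fact k))"
    unfolding exp_def by (rule bounded_linear.suminf[OF bounded_linear_mat_of summable_exp_generic])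
  also have "\<dots> = mexp A"
    by (simp add: mexp_def cmat_of_mpow[symmetric] divide_inverse_commute)
  finally show ?thesis ..
qed

lemma cmat_of_evol:
  fixes H X :: "complex^'n::finite^'n"
  shows "cmat_of (evol H t X) = heis_evol (cmat_of (cscale \<i> H)) t (cmat_of X)"
proof -
  have "cscale (\<i> * complex_of_real t) H = t *\<^sub>R cscale \<i> H"
    and "cscale (- \<i> * complex_of_real t) H = (- t) *\<^sub>R cscale \<i> H"
    by (simp_all add: cscale_def vec_eq_iff scaleR_conv_of_real[where 'a=complex])
  then show ?thesis
    unfolding evol_def heis_evol_def mexp_eq_exp by (simp add: cmat_of_ring_hom mat_of_inverse)
qed

lemma cmat_of_comm: "cmat_of (comm A B) = bracket (cmat_of A) (cmat_of B :: 'n::finite cmat)"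
  by (simp add: comm_def bracket_def cmat_of_ring_hom)

lemma opnorm_eq_norm_cmat_of: "opnorm A = norm (cmat_of A :: 'n::finite cmat)"
  by (simp add: norm_cmat.rep_eq)

section \<open>Skew-Hermitian matrices\<close>

text \<open>The real inner product on \<^typ>\<open>complex^'n\<close> is the real part of the Hermitian one, so
  this says \<open>Re \<langle>Y x, x\<rangle> = 0\<close>, i.e.\ \<open>Y\<^sup>* = - Y\<close>.\<close>

definition skew_hermitian :: "'n::finite cmat \<Rightarrow> bool" where
  "skew_hermitian Y \<longleftrightarrow> (\<forall>x. inner (mat_of Y *v x) x = 0)"

lemma skew_hermitian_sum:
  "(\<And>j. j \<in> S \<Longrightarrow> skew_hermitian (Y j)) \<Longrightarrow> skew_hermitian (\<Sum>j\<in>S. c j *\<^sub>R Y j)"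
proof (induction S rule: infinite_finite_induct)
  case (insert j S)
  then show ?case
    by (simp add: skew_hermitian_def matrix_vector_mult_add_rdistrib inner_add_left
        scaleR_matrix_vector)
qed (simp_all add: skew_hermitian_def)

definition ii :: "'n::finite cmat" where
  "ii = cmat_of (cscale \<i> (mat 1))"

lemma cscale_mat_1_mult [simp]: "cscale c (mat 1) ** M = cscale c M"
  and mult_cscale_mat_1 [simp]: "M ** cscale c (mat 1) = cscale c M"
  for M :: "complex^'n::finite^'n"
  by (simp_all add: cscale_def matrix_matrix_mult_def mat_def vec_eq_iff if_distrib if_distribR
      mult.commute cong: if_cong)

lemma mat_of_ii [simp]: "mat_of ii = cscale \<i> (mat 1)"
  by (simp add: ii_def)

lemma ii_central: "ii * Y = Y * ii"
  by (simp add: mat_of_inject[symmetric])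

lemma bracket_ii_mult_left: "bracket (ii * Y) X = ii * bracket Y X"
  by (simp add: bracket_def right_diff_distrib mult.assoc[symmetric] ii_central[of X])

lemma cmat_of_cscale_ii: "cmat_of (cscale \<i> A) = ii * cmat_of A"
  by (simp add: mat_of_inject[symmetric])

lemma norm_ii_mult_le: "norm (ii * Y) \<le> norm Y"
  unfolding norm_cmat.rep_eq
proof (rule opnorm_le)
  fix x
  have "mat_of (ii * Y) = cscale \<i> (mat_of Y)"
    by simp
  then have "mat_of (ii * Y) *v x = \<i> *s (mat_of Y *v x)"
    by (simp add: cscale_def matrix_vector_mult_def vec_eq_iff sum_distrib_left mult.assoc)
  then show "norm (mat_of (ii * Y) *v x) \<le> opnorm (mat_of Y) * norm x"
    using norm_matrix_vector_le_opnorm[of "mat_of Y" x] by (simp add: norm_vec_def norm_mult)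
qed

lemma heis_evol_ii_mult: "heis_evol K t (ii * Y) = ii * heis_evol K t Y"
  unfolding heis_evol_def by (simp only: mult.assoc[symmetric] ii_central[of "exp (t *\<^sub>R K)"])

lemma skew_hermitian_ii_mult:
  fixes A :: "complex^'n::finite^'n"
  assumes "adjoint A = A"
  shows "skew_hermitian (ii * cmat_of A)"
  unfolding skew_hermitian_def
proof
  fix x :: "complex^'n"
  have herm: "cnj (A $ a $ b) = A $ b $ a" for a b
    using arg_cong[OF assms, of "\<lambda>M. M $ b $ a"] by (simp add: adjoint_def)
  \<comment> \<open>\<open>S = \<langle>x, A x\<rangle>\<close>, which is real because \<open>A\<close> is Hermitian\<close>
  define S where "S = (\<Sum>a\<in>UNIV. \<Sum>b\<in>UNIV. A $ b $ a * cnj (x $ b) * x $ a)"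
  have "cnj S = (\<Sum>a\<in>UNIV. \<Sum>b\<in>UNIV. A $ a $ b * x $ b * cnj (x $ a))"
    by (simp add: S_def cnj_sum herm)
  also have "\<dots> = S"
    unfolding S_def by (subst sum.swap) (simp add: mult_ac)
  finally have "Im S = 0"
    using Reals_cnj_iff complex_is_Real_iff by blast
  have "inner (mat_of (ii * cmat_of A) *v x) x
      = Re (\<Sum>a\<in>UNIV. cnj ((cscale \<i> A *v x) $ a) * x $ a)"
    by (simp add: inner_vec_def inner_complex_def Re_sum)
  also have "(\<Sum>a\<in>UNIV. cnj ((cscale \<i> A *v x) $ a) * x $ a) = - \<i> * S"
    by (simp add: S_def cscale_def matrix_vector_mult_def cnj_sum sum_distrib_left
        sum_distrib_right herm mult_ac)
  finally show "inner (mat_of (ii * cmat_of A) *v x) x = 0"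
    using \<open>Im S = 0\<close> by simp
qed

lemma norm_exp_skew_hermitian_apply:
  fixes K :: "'n::finite cmat"
  assumes "skew_hermitian K"
  shows "norm (mat_of (exp (s *\<^sub>R K)) *v x) = norm x"
proof -
  define u where "u s = mat_of (exp (s *\<^sub>R K)) *v x" for s
  have "bounded_linear (\<lambda>Y::'n cmat. mat_of Y *v x)"
    by (rule bounded_linear_intro[where K="norm x"])
      (simp_all add: matrix_vector_mult_add_rdistrib scaleR_matrix_vector norm_cmat.rep_eq
        norm_matrix_vector_le_opnorm)
  from bounded_linear.has_vector_derivative[OF this exp_scaleR_has_vector_derivative_left]
  have du: "(u has_vector_derivative (mat_of K *v u s)) (at s)" for s
    by (simp add: u_def[abs_def] matrix_vector_mul_assoc)
  have "((\<lambda>s. inner (u s) (u s)) has_real_derivative 0) (at s)" for s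
  proof -
    have "((\<lambda>s. inner (u s) (u s)) has_vector_derivative
        inner (u s) (mat_of K *v u s) + inner (mat_of K *v u s) (u s)) (at s)"
      by (rule bounded_bilinear.has_vector_derivative[OF bounded_bilinear_inner du du])
    with assms show ?thesis
      by (simp add: skew_hermitian_def inner_commute has_real_derivative_iff_has_vector_derivative)
  qed
  then have "inner (u s) (u s) = inner (u 0) (u 0)"
    using has_field_derivative_zero_constant[OF convex_UNIV, of "\<lambda>s. inner (u s) (u s)"]
    by (metis UNIV_I)
  then show ?thesis
    by (simp add: u_def power2_norm_eq_inner[symmetric] power2_eq_iff_nonneg)
qed

lemma norm_exp_skew_hermitian_le:
  "skew_hermitian K \<Longrightarrow> norm (exp (s *\<^sub>R K)) \<le> 1"
  unfolding norm_cmat.rep_eq by (rule opnorm_le) (simp add: norm_exp_skew_hermitian_apply)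

lemma inner_exp_skew_hermitian_apply:
  fixes K :: "'n::finite cmat"
  assumes "skew_hermitian K"
  shows "inner (mat_of (exp (s *\<^sub>R K)) *v x) (mat_of (exp (s *\<^sub>R K)) *v y) = inner x y"
proof -
  have polar: "inner a b = ((norm (a + b))\<^sup>2 - (norm a)\<^sup>2 - (norm b)\<^sup>2) / 2" for a b :: "complex^'n"
    by (simp add: power2_norm_eq_inner inner_add_left inner_add_right inner_commute)
  show ?thesis
    using assms
    by (simp add: polar[of "mat_of (exp (s *\<^sub>R K)) *v x"] polar[of x]
        matrix_vector_right_distrib[symmetric] norm_exp_skew_hermitian_apply)
qed

lemma skew_hermitian_heis_evol:
  fixes K :: "'n::finite cmat"
  assumes K: "skew_hermitian K" and Y: "skew_hermitian Y"
  shows "skew_hermitian (heis_evol K t Y)"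
  unfolding skew_hermitian_def
proof
  fix x :: "complex^'n"
  let ?U = "exp (t *\<^sub>R K)" and ?V = "exp ((- t) *\<^sub>R K)"
  define y where "y = mat_of ?V *v x"
  have "mat_of ?U *v y = mat_of (?U * ?V) *v x"
    by (simp add: y_def matrix_vector_mul_assoc)
  then have x: "x = mat_of ?U *v y"
    unfolding exp_scaleR_mult_exp_minus by simp
  have "mat_of (heis_evol K t Y) *v x = mat_of ?U *v (mat_of Y *v y)"
    by (simp add: heis_evol_def y_def matrix_vector_mul_assoc matrix_mul_assoc)
  then have "inner (mat_of (heis_evol K t Y) *v x) x = inner (mat_of Y *v y) y"
    using inner_exp_skew_hermitian_apply[OF K] x by metis
  with Y show "inner (mat_of (heis_evol K t Y) *v x) x = 0"
    by (simp add: skew_hermitian_def)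
qed

section \<open>Upper right Dini derivatives\<close>

text \<open>\<open>dini_upper_le f s D\<close> says \<open>D\<^sup>+f(s) \<le> D\<close>, where \<open>D\<^sup>+\<close> is the upper right Dini derivative.\<close>

definition dini_upper_le :: "(real \<Rightarrow> real) \<Rightarrow> real \<Rightarrow> real \<Rightarrow> bool" where
  "dini_upper_le f s D \<longleftrightarrow> (\<forall>e>0. \<forall>\<^sub>F \<epsilon> in at_right 0. f (s + \<epsilon>) \<le> f s + \<epsilon> * (D + e))"

lemma dini_upper_le_mono:
  assumes "dini_upper_le f s D" and "D \<le> D'"
  shows "dini_upper_le f s D'"
  unfolding dini_upper_le_def
proof (intro allI impI)
  fix e :: real assume "0 < e"
  with assms(1) have "\<forall>\<^sub>F \<epsilon> in at_right 0. f (s + \<epsilon>) \<le> f s + \<epsilon> * (D + e) \<and> 0 < \<epsilon>"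
    unfolding dini_upper_le_def by (auto intro: eventually_conj eventually_at_right_less)
  then show "\<forall>\<^sub>F \<epsilon> in at_right 0. f (s + \<epsilon>) \<le> f s + \<epsilon> * (D' + e)"
  proof eventually_elim
    case (elim \<epsilon>)
    then have "\<epsilon> * (D + e) \<le> \<epsilon> * (D' + e)"
      using \<open>D \<le> D'\<close> by (intro mult_left_mono) auto
    with elim show ?case by linarith
  qed
qed

lemma dini_upper_le_add:
  assumes "dini_upper_le f s D" and "dini_upper_le g s D'"
  shows "dini_upper_le (\<lambda>x. f x + g x) s (D + D')"
  unfolding dini_upper_le_def
proof (intro allI impI)
  fix e :: real assume "0 < e"
  then have "\<forall>\<^sub>F \<epsilon> in at_right 0.
      f (s + \<epsilon>) \<le> f s + \<epsilon> * (D + e / 2) \<and> g (s + \<epsilon>) \<le> g s + \<epsilon> * (D' + e / 2)"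
    using assms unfolding dini_upper_le_def by (auto intro: eventually_conj)
  then show "\<forall>\<^sub>F \<epsilon> in at_right 0. f (s + \<epsilon>) + g (s + \<epsilon>) \<le> f s + g s + \<epsilon> * (D + D' + e)"
    by eventually_elim (simp add: algebra_simps)
qed

lemma dini_upper_le_sum:
  assumes "finite I" and "\<And>i. i \<in> I \<Longrightarrow> dini_upper_le (f i) s (D i)"
  shows "dini_upper_le (\<lambda>x. \<Sum>i\<in>I. f i x) s (\<Sum>i\<in>I. D i)"
  using assms
proof (induction I rule: finite_induct)
  case empty
  show ?case
    unfolding dini_upper_le_def
    by (auto intro: eventually_mono[OF eventually_at_right_less])
next
  case (insert i I)
  then show ?case
    by (simp add: dini_upper_le_add)
qed

lemma dini_upper_le_max_0:
  assumes "dini_upper_le f s D" and "0 \<le> D"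
  shows "dini_upper_le (\<lambda>x. max 0 (f x)) s D"
  unfolding dini_upper_le_def
proof (intro allI impI)
  fix e :: real assume "0 < e"
  with assms(1) have "\<forall>\<^sub>F \<epsilon> in at_right 0. f (s + \<epsilon>) \<le> f s + \<epsilon> * (D + e) \<and> 0 < \<epsilon>"
    unfolding dini_upper_le_def by (auto intro: eventually_conj eventually_at_right_less)
  then show "\<forall>\<^sub>F \<epsilon> in at_right 0. max 0 (f (s + \<epsilon>)) \<le> max 0 (f s) + \<epsilon> * (D + e)"
  proof eventually_elim
    case (elim \<epsilon>)
    then have "0 \<le> \<epsilon> * (D + e)"
      using \<open>0 \<le> D\<close> \<open>0 < e\<close> by simp
    with elim show ?case by linarith
  qed
qed

lemma has_vector_derivative_at_right_approx:
  assumes "(f has_vector_derivative f') (at_right s)" and "0 < e"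
  shows "\<forall>\<^sub>F \<epsilon> in at_right 0. norm (f (s + \<epsilon>) - f s - \<epsilon> *\<^sub>R f') \<le> \<epsilon> * e"
proof -
  obtain d where "0 < d"
    and d: "\<And>y. s < y \<Longrightarrow> norm (y - s) < d \<Longrightarrow> norm (f y - f s - (y - s) *\<^sub>R f') \<le> e * norm (y - s)"
    using assms unfolding has_vector_derivative_def has_derivative_within_alt by force
  show ?thesis
    unfolding eventually_at_right_field
    using \<open>0 < d\<close> d[of "s + _"] by (intro exI[of _ d]) (auto simp: mult.commute)
qed

lemma dini_upper_le_norm:
  assumes "(f has_vector_derivative f') (at_right s)"
  shows "dini_upper_le (\<lambda>x. norm (f x)) s (norm f')"
  unfolding dini_upper_le_def
proof (intro allI impI)
  fix e :: real assume "0 < e"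
  with has_vector_derivative_at_right_approx[OF assms]
  have "\<forall>\<^sub>F \<epsilon> in at_right 0. norm (f (s + \<epsilon>) - f s - \<epsilon> *\<^sub>R f') \<le> \<epsilon> * e \<and> 0 < \<epsilon>"
    by (auto intro: eventually_conj eventually_at_right_less)
  then show "\<forall>\<^sub>F \<epsilon> in at_right 0. norm (f (s + \<epsilon>)) \<le> norm (f s) + \<epsilon> * (norm f' + e)"
  proof eventually_elim
    case (elim \<epsilon>)
    have "norm (f (s + \<epsilon>)) \<le> norm (f s + \<epsilon> *\<^sub>R f') + norm (f (s + \<epsilon>) - f s - \<epsilon> *\<^sub>R f')"
      using norm_triangle_ineq[of "f s + \<epsilon> *\<^sub>R f'" "f (s + \<epsilon>) - f s - \<epsilon> *\<^sub>R f'"] by simp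
    also have "\<dots> \<le> norm (f s) + norm (\<epsilon> *\<^sub>R f') + norm (f (s + \<epsilon>) - f s - \<epsilon> *\<^sub>R f')"
      by (metis add_right_mono norm_scaleR norm_triangle_ineq)
    also have "\<dots> \<le> norm (f s) + \<epsilon> * (norm f' + e)"
      using elim by (simp add: algebra_simps)
    finally show ?case .
  qed
qed

lemma dini_upper_le_has_real_derivative:
  assumes "(f has_real_derivative D) (at_right s)"
  shows "dini_upper_le f s D"
  unfolding dini_upper_le_def
proof (intro allI impI)
  fix e :: real assume "0 < e"
  with assms show "\<forall>\<^sub>F \<epsilon> in at_right 0. f (s + \<epsilon>) \<le> f s + \<epsilon> * (D + e)"
    using has_vector_derivative_at_right_approx[of f D s e]
    by (auto simp: has_real_derivative_iff_has_vector_derivative algebra_simps abs_le_iff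
        elim!: eventually_mono)
qed

lemma dini_upper_le_0_imp_le:
  fixes f :: "real \<Rightarrow> real"
  assumes "a \<le> b" and cont: "continuous_on {a..b} f"
    and dini: "\<And>s. a \<le> s \<Longrightarrow> s < b \<Longrightarrow> dini_upper_le f s 0"
  shows "f b \<le> f a"
proof (rule field_le_epsilon)
  fix e :: real assume "0 < e"
  define e' where "e' = e / (b - a + 1)"
  have "0 < e'"
    using \<open>0 < e\<close> \<open>a \<le> b\<close> by (simp add: e'_def)
  define P where "P = {s \<in> {a..b}. f s - e' * (s - a) \<le> f a}"
  have "closed P"
  proof -
    have "continuous_on {a..b} (\<lambda>s. f s - e' * (s - a))"
      by (intro continuous_intros cont)
    then have "closed ({a..b} \<inter> (\<lambda>s. f s - e' * (s - a)) -` {..f a})"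
      by (rule continuous_closed_preimage) auto
    then show ?thesis
      by (simp add: P_def Int_def)
  qed
  moreover have "a \<in> P" "bdd_above P"
    using \<open>a \<le> b\<close> by (auto simp: P_def bdd_above_def)
  ultimately have "Sup P \<in> P"
    using closed_contains_Sup by blast
  have "Sup P = b"
  proof (rule ccontr)
    let ?m = "Sup P"
    assume "?m \<noteq> b"
    with \<open>?m \<in> P\<close> have m: "a \<le> ?m" "?m < b"
      by (auto simp: P_def)
    with dini \<open>0 < e'\<close> obtain d where "0 < d"
      and d: "\<And>\<epsilon>. 0 < \<epsilon> \<Longrightarrow> \<epsilon> < d \<Longrightarrow> f (?m + \<epsilon>) \<le> f ?m + \<epsilon> * e'"
      unfolding dini_upper_le_def eventually_at_right_field by fastforce
    define \<epsilon> where "\<epsilon> = min d (b - ?m) / 2"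
    have \<epsilon>: "0 < \<epsilon>" "\<epsilon> < d" "?m + \<epsilon> \<le> b"
      using \<open>0 < d\<close> m unfolding \<epsilon>_def by (auto simp: min_def field_simps)
    have "f (?m + \<epsilon>) - e' * (?m + \<epsilon> - a) \<le> f ?m - e' * (?m - a)"
      using d[OF \<epsilon>(1,2)] by (simp add: algebra_simps)
    also have "\<dots> \<le> f a"
      using \<open>?m \<in> P\<close> by (simp add: P_def)
    finally have "?m + \<epsilon> \<in> P"
      using \<epsilon> m by (simp add: P_def)
    then have "?m + \<epsilon> \<le> ?m"
      using \<open>bdd_above P\<close> by (rule cSup_upper)
    with \<open>0 < \<epsilon>\<close> show False by simp
  qed
  with \<open>Sup P \<in> P\<close> have "f b - e' * (b - a) \<le> f a"
    by (simp add: P_def)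
  moreover have "e' * (b - a) \<le> e"
    using \<open>0 < e\<close> \<open>a \<le> b\<close> by (simp add: e'_def field_simps)
  ultimately show "f b \<le> f a + e"
    by linarith
qed

lemma dini_upper_le_exp_weight:
  fixes V :: "real \<Rightarrow> real"
  assumes "0 \<le> L" and "0 \<le> s" and "0 \<le> V s" and dini: "dini_upper_le V s (L * V s)"
  shows "dini_upper_le (\<lambda>x. exp (- L * x) * V x) s 0"
  unfolding dini_upper_le_def
proof (intro allI impI)
  fix e :: real assume "0 < e"
  with dini have "\<forall>\<^sub>F \<epsilon> in at_right 0. V (s + \<epsilon>) \<le> V s + \<epsilon> * (L * V s + e) \<and> 0 < \<epsilon>"
    unfolding dini_upper_le_def by (auto intro: eventually_conj eventually_at_right_less)
  then show "\<forall>\<^sub>F \<epsilon> in at_right 0.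
      exp (- L * (s + \<epsilon>)) * V (s + \<epsilon>) \<le> exp (- L * s) * V s + \<epsilon> * (0 + e)"
  proof eventually_elim
    case (elim \<epsilon>)
    define a where "a = exp (- L * s)"
    define b where "b = exp (- L * \<epsilon>)"
    have a: "0 < a" "a \<le> 1" and b: "0 < b" "b \<le> 1"
      using \<open>0 \<le> L\<close> \<open>0 \<le> s\<close> elim by (auto simp: a_def b_def)
    have "b * (1 + \<epsilon> * L) \<le> b * exp (\<epsilon> * L)"
      using b by (intro mult_left_mono exp_ge_add_one_self) simp
    also have "\<dots> = 1"
      by (simp add: b_def exp_minus_inverse[symmetric] mult.commute exp_add[symmetric])
    finally have b1: "b * (1 + \<epsilon> * L) \<le> 1" .
    have "exp (- L * (s + \<epsilon>)) * V (s + \<epsilon>) = a * b * V (s + \<epsilon>)"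
      by (simp add: a_def b_def exp_add[symmetric] algebra_simps)
    also have "\<dots> \<le> a * b * (V s * (1 + \<epsilon> * L) + \<epsilon> * e)"
      using a b elim by (intro mult_left_mono) (simp_all add: algebra_simps)
    also have "\<dots> = a * (b * (1 + \<epsilon> * L)) * V s + (a * b) * (\<epsilon> * e)"
      by (simp add: algebra_simps)
    also have "\<dots> \<le> a * V s + \<epsilon> * e"
    proof (rule add_mono)
      show "a * (b * (1 + \<epsilon> * L)) * V s \<le> a * V s"
        using a b1 \<open>0 \<le> V s\<close> by (intro mult_right_mono mult_left_le) simp_all
      show "a * b * (\<epsilon> * e) \<le> \<epsilon> * e"
        using a b elim \<open>0 < e\<close> by (intro mult_left_le_one_le mult_le_one) simp_all
    qed
    finally show ?case
      by (simp add: a_def)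
  qed
qed

lemma dini_gronwall:
  fixes V :: "real \<Rightarrow> real"
  assumes "0 \<le> T" and "0 \<le> L" and cont: "continuous_on {0..T} V"
    and nonneg: "\<And>s. 0 \<le> s \<Longrightarrow> s < T \<Longrightarrow> 0 \<le> V s"
    and dini: "\<And>s. 0 \<le> s \<Longrightarrow> s < T \<Longrightarrow> dini_upper_le V s (L * V s)"
  shows "V T \<le> exp (L * T) * V 0"
proof -
  have "continuous_on {0..T} (\<lambda>x. exp (- L * x) * V x)"
    by (intro continuous_intros cont)
  then have "exp (- L * T) * V T \<le> exp (- L * 0) * V 0"
    using dini_upper_le_0_imp_le[OF \<open>0 \<le> T\<close>] dini_upper_le_exp_weight[OF \<open>0 \<le> L\<close> _ nonneg dini]
    by blast
  then have "exp (L * T) * (exp (- L * T) * V T) \<le> exp (L * T) * V 0"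
    by simp
  then show ?thesis
    by (simp add: mult.assoc[symmetric] exp_add[symmetric])
qed

text \<open>Gronwall applied to the total positive part \<open>\<Sum>\<^sub>i max 0 (w\<^sub>i)\<close>.\<close>

lemma dini_cooperative_nonpos:
  fixes w :: "real \<Rightarrow> 'i::finite \<Rightarrow> real" and c :: "'i \<Rightarrow> 'i \<Rightarrow> real"
  assumes "0 \<le> T" and c: "\<And>i j. 0 \<le> c i j"
    and cont: "\<And>i. continuous_on {0..T} (\<lambda>t. w t i)"
    and dini: "\<And>i s. 0 \<le> s \<Longrightarrow> s < T \<Longrightarrow> dini_upper_le (\<lambda>t. w t i) s (\<Sum>j\<in>UNIV. c i j * w s j)"
    and init: "\<And>i. w 0 i \<le> 0"
  shows "w T i \<le> 0"
proof -
  define V where "V t = (\<Sum>i\<in>UNIV. max 0 (w t i))" for t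
  define L where "L = (\<Sum>i\<in>UNIV. \<Sum>j\<in>UNIV. c i j)"
  have V_nonneg: "0 \<le> V t" for t
    by (simp add: V_def sum_nonneg)
  have le_V: "w t i \<le> V t" for t i
    using member_le_sum[of i UNIV "\<lambda>i. max 0 (w t i)"] by (simp add: V_def)
  have "dini_upper_le V s (L * V s)" if s: "0 \<le> s" "s < T" for s
  proof -
    have "dini_upper_le (\<lambda>t. max 0 (w t i)) s ((\<Sum>j\<in>UNIV. c i j) * V s)" for i
    proof (rule dini_upper_le_max_0)
      have "(\<Sum>j\<in>UNIV. c i j * w s j) \<le> (\<Sum>j\<in>UNIV. c i j * V s)"
        by (intro sum_mono mult_left_mono le_V c)
      then show "dini_upper_le (\<lambda>t. w t i) s ((\<Sum>j\<in>UNIV. c i j) * V s)"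
        by (intro dini_upper_le_mono[OF dini[OF s]]) (simp add: sum_distrib_right)
      show "0 \<le> (\<Sum>j\<in>UNIV. c i j) * V s"
        by (intro mult_nonneg_nonneg sum_nonneg c V_nonneg)
    qed
    then have "dini_upper_le V s (\<Sum>i\<in>UNIV. (\<Sum>j\<in>UNIV. c i j) * V s)"
      unfolding V_def[abs_def] by (intro dini_upper_le_sum) auto
    then show ?thesis
      by (simp add: L_def sum_distrib_right)
  qed
  moreover have "continuous_on {0..T} V"
    unfolding V_def by (intro continuous_intros cont)
  moreover have "0 \<le> L"
    by (simp add: L_def sum_nonneg c)
  ultimately have "V T \<le> exp (L * T) * V 0"
    using dini_gronwall[OF \<open>0 \<le> T\<close>] V_nonneg by blast
  also have "V 0 = 0"
    using init by (simp add: V_def max_absorb1)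
  finally show ?thesis
    using le_V[of T i] by simp
qed

lemma dini_comparison:
  fixes x y :: "real \<Rightarrow> 'i::finite \<Rightarrow> real" and c :: "'i \<Rightarrow> 'i \<Rightarrow> real"
  assumes "0 \<le> T" and c: "\<And>i j. 0 \<le> c i j"
    and cont_x: "\<And>i. continuous_on {0..T} (\<lambda>t. x t i)"
    and cont_y: "\<And>i. continuous_on {0..T} (\<lambda>t. y t i)"
    and dini_x: "\<And>i s. 0 \<le> s \<Longrightarrow> s < T \<Longrightarrow>
      dini_upper_le (\<lambda>t. x t i) s (\<Sum>j\<in>UNIV. c i j * x s j)"
    and deriv_y: "\<And>i s. 0 \<le> s \<Longrightarrow> s < T \<Longrightarrow>
      ((\<lambda>t. y t i) has_real_derivative (\<Sum>j\<in>UNIV. c i j * y s j)) (at_right s)"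
    and init: "\<And>i. x 0 i \<le> y 0 i"
  shows "x T i \<le> y T i"
proof -
  have "x T i - y T i \<le> 0"
  proof (rule dini_cooperative_nonpos[where w = "\<lambda>t i. x t i - y t i", OF \<open>0 \<le> T\<close> c])
    show "continuous_on {0..T} (\<lambda>t. x t i - y t i)" for i
      by (intro continuous_intros cont_x cont_y)
    show "dini_upper_le (\<lambda>t. x t i - y t i) s (\<Sum>j\<in>UNIV. c i j * (x s j - y s j))"
      if "0 \<le> s" "s < T" for i s
    proof -
      have "dini_upper_le (\<lambda>t. x t i + - y t i) s
          ((\<Sum>j\<in>UNIV. c i j * x s j) + - (\<Sum>j\<in>UNIV. c i j * y s j))"
        using dini_x[OF that] deriv_y[OF that]
        by (intro dini_upper_le_add[OF _ dini_upper_le_has_real_derivative] DERIV_minus)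
      then show ?thesis
        by (simp add: right_diff_distrib sum_subtractf)
    qed
    show "x 0 i - y 0 i \<le> 0" for i
      using init[of i] by simp
  qed
  then show ?thesis
    by simp
qed

lemma has_real_derivative_imp_continuous_on_Icc:
  assumes "\<And>t. a \<le> t \<Longrightarrow> (f has_real_derivative D t) (at t within {a..})"
  shows "continuous_on {a..b} f"
proof -
  have "continuous_on {a..} f"
    using assms by (intro DERIV_continuous_on) auto
  then show ?thesis
    by (rule continuous_on_subset) auto
qed

lemma dini_integral_bound:
  fixes f r :: "real \<Rightarrow> real"
  assumes "a \<le> b" and cont_f: "continuous_on {a..b} f" and cont_r: "continuous_on {a..b} r"
    and dini: "\<And>s. a \<le> s \<Longrightarrow> s < b \<Longrightarrow> dini_upper_le f s (r s)"
  shows "f b - f a \<le> integral {a..b} r"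
proof -
  define \<psi> where "\<psi> x = f x + - integral {a..x} r" for x
  have "dini_upper_le \<psi> s 0" if s: "a \<le> s" "s < b" for s
  proof -
    have "((\<lambda>x. integral {a..x} r) has_real_derivative r s) (at s within {s..b})"
      using integral_has_real_derivative[OF cont_r, of s] s by (auto intro: DERIV_subset)
    then have "((\<lambda>x. - integral {a..x} r) has_real_derivative - r s) (at_right s)"
      using at_within_Icc_at_right[OF \<open>s < b\<close>] by (auto intro: DERIV_minus)
    from dini_upper_le_add[OF dini[OF s] dini_upper_le_has_real_derivative[OF this]]
    show ?thesis
      by (simp add: \<psi>_def[abs_def])
  qed
  moreover have "continuous_on {a..b} \<psi>"
    unfolding \<psi>_def
    by (intro continuous_intros cont_f indefinite_integral_continuous_1
        integrable_continuous_interval cont_r)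
  ultimately have "\<psi> b \<le> \<psi> a"
    using dini_upper_le_0_imp_le[OF \<open>a \<le> b\<close>] by blast
  then show ?thesis
    by (simp add: \<psi>_def)
qed

section \<open>The Lieb-Robinson differential inequality\<close>

lemma has_vector_derivative_bracket_heis_evol:
  "((\<lambda>s. bracket (heis_evol K s X) B) has_vector_derivative
     bracket (heis_evol K t (bracket K X)) B) (at t within S)"
  using has_vector_derivative_heis_evol[where K=K and Y=X and t=t and S=S] unfolding bracket_def
  by (intro has_vector_derivative_diff has_vector_derivative_mult_left
      has_vector_derivative_mult_right) assumption+

text \<open>The part \<open>[A, C]\<close> of the derivative generates the norm-nonincreasing flow
  \<open>C \<mapsto> e\<^sup>s\<^sup>A C e\<^sup>-\<^sup>s\<^sup>A\<close>, so only \<open>R\<close> can make \<open>\<parallel>C\<parallel>\<close> grow.\<close>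

lemma dini_upper_le_norm_bracket_flow:
  fixes C :: "real \<Rightarrow> 'a::{real_normed_algebra_1,banach}"
  assumes deriv: "(C has_vector_derivative (bracket A (C t) + R)) (at_right t)"
    and contraction: "\<And>s. norm (exp (s *\<^sub>R A)) \<le> 1"
  shows "dini_upper_le (\<lambda>s. norm (C s)) t (norm R)"
  unfolding dini_upper_le_def
proof (intro allI impI)
  fix e :: real assume "0 < e"
  define \<phi> where "\<phi> s = C s - heis_evol A (s - t) (C t)" for s
  have "((\<lambda>s. s - t) has_vector_derivative 1) (at_right t)"
    using has_vector_derivative_diff[OF has_vector_derivative_id has_vector_derivative_const] by simp
  from vector_diff_chain_within[OF this has_vector_derivative_heis_evol]
  have "((\<lambda>s. heis_evol A (s - t) (C t)) has_vector_derivative bracket A (C t)) (at_right t)"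
    by (simp add: o_def)
  then have "(\<phi> has_vector_derivative R) (at_right t)"
    unfolding \<phi>_def using has_vector_derivative_diff[OF deriv] by fastforce
  with \<open>0 < e\<close> have "\<forall>\<^sub>F \<epsilon> in at_right 0. norm (\<phi> (t + \<epsilon>)) \<le> norm (\<phi> t) + \<epsilon> * (norm R + e)"
    using dini_upper_le_norm unfolding dini_upper_le_def by blast
  then show "\<forall>\<^sub>F \<epsilon> in at_right 0. norm (C (t + \<epsilon>)) \<le> norm (C t) + \<epsilon> * (norm R + e)"
  proof eventually_elim
    case (elim \<epsilon>)
    have "norm (C (t + \<epsilon>)) \<le> norm (heis_evol A \<epsilon> (C t)) + norm (\<phi> (t + \<epsilon>))"
      unfolding \<phi>_def
      using norm_triangle_ineq[of "heis_evol A \<epsilon> (C t)" "C (t + \<epsilon>) - heis_evol A \<epsilon> (C t)"]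
      by simp
    also have "\<dots> \<le> norm (C t) + \<epsilon> * (norm R + e)"
      using elim norm_heis_evol_le[OF contraction] by (simp add: \<phi>_def add_mono)
    finally show ?case .
  qed
qed

lemma norm_bracket_heis_evol_bracket_le:
  assumes "skew_hermitian K"
  shows "norm (bracket (heis_evol K t X) (bracket (heis_evol K t (ii * Y)) B))
    \<le> 2 * norm X * norm (bracket (heis_evol K t Y) B)"
proof -
  have "norm (heis_evol K t X) \<le> norm X"
    using norm_heis_evol_le norm_exp_skew_hermitian_le[OF assms] by blast
  moreover have "norm (bracket (heis_evol K t (ii * Y)) B) \<le> norm (bracket (heis_evol K t Y) B)"
    by (simp add: heis_evol_ii_mult bracket_ii_mult_left norm_ii_mult_le)
  ultimately show ?thesis
    by (meson norm_bracket_le order_trans mult_mono mult_left_mono norm_ge_zero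
        zero_le_numeral mult_nonneg_nonneg)
qed

lemma dini_upper_le_norm_bracket_heis_evol:
  fixes \<Gamma> :: "'j::finite \<Rightarrow> 'n::finite cmat"
  assumes K: "K = (\<Sum>j\<in>UNIV. h j *\<^sub>R (ii * \<Gamma> j))"
    and skew: "\<And>j. skew_hermitian (ii * \<Gamma> j)"
    and commute: "\<And>j. j \<notin> S \<Longrightarrow> bracket (\<Gamma> j) X = 0"
  shows "dini_upper_le (\<lambda>s. norm (bracket (heis_evol K s X) B)) t
           (\<Sum>j\<in>S. 2 * norm X * \<bar>h j\<bar> * norm (bracket (heis_evol K t (\<Gamma> j)) B))"
proof -
  let ?Xt = "heis_evol K t X" and ?Q = "\<lambda>j. heis_evol K t (ii * \<Gamma> j)"
  define A where "A = (\<Sum>j\<in>S. h j *\<^sub>R ?Q j)"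
  define R where "R = - (\<Sum>j\<in>S. h j *\<^sub>R bracket ?Xt (bracket (?Q j) B))"
  have skew_K: "skew_hermitian K"
    unfolding K by (intro skew_hermitian_sum skew)
  have "bracket K X = (\<Sum>j\<in>UNIV. h j *\<^sub>R bracket (ii * \<Gamma> j) X)"
    unfolding K bracket_sum_left bracket_scaleR_left ..
  also have "\<dots> = (\<Sum>j\<in>S. h j *\<^sub>R bracket (ii * \<Gamma> j) X)"
    by (rule sum.mono_neutral_right) (auto simp: bracket_ii_mult_left commute)
  finally have "heis_evol K t (bracket K X) = bracket A ?Xt"
    by (simp add: A_def heis_evol_sum heis_evol_scaleR heis_evol_bracket bracket_sum_left
        bracket_scaleR_left)
  then have "bracket (heis_evol K t (bracket K X)) B = bracket A (bracket ?Xt B) + R"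
    by (simp add: bracket_jacobi A_def R_def bracket_sum_left bracket_sum_right
        bracket_scaleR_left bracket_scaleR_right scaleR_right_diff_distrib sum_subtractf)
  then have "dini_upper_le (\<lambda>s. norm (bracket (heis_evol K s X) B)) t (norm R)"
    using has_vector_derivative_bracket_heis_evol[of K X B t "{t<..}"]
    by (intro dini_upper_le_norm_bracket_flow[where A = A])
      (simp_all add: A_def norm_exp_skew_hermitian_le skew_hermitian_sum
        skew_hermitian_heis_evol skew_K skew)
  moreover have "norm R \<le> (\<Sum>j\<in>S. 2 * norm X * \<bar>h j\<bar> * norm (bracket (heis_evol K t (\<Gamma> j)) B))"
  proof -
    have "norm R \<le> (\<Sum>j\<in>S. \<bar>h j\<bar> * norm (bracket ?Xt (bracket (?Q j) B)))"
      unfolding R_def norm_minus_cancel by (rule order_trans[OF norm_sum]) simp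
    also have "\<dots> \<le> (\<Sum>j\<in>S. 2 * norm X * \<bar>h j\<bar> * norm (bracket (heis_evol K t (\<Gamma> j)) B))"
    proof (rule sum_mono)
      fix j
      show "\<bar>h j\<bar> * norm (bracket ?Xt (bracket (?Q j) B))
          \<le> 2 * norm X * \<bar>h j\<bar> * norm (bracket (heis_evol K t (\<Gamma> j)) B)"
        using mult_left_mono[OF norm_bracket_heis_evol_bracket_le[OF skew_K], of "\<bar>h j\<bar>"]
        by (simp add: mult_ac)
    qed
    finally show ?thesis .
  qed
  ultimately show ?thesis
    by (rule dini_upper_le_mono)
qed

lemma continuous_on_norm_bracket_heis_evol:
  "continuous_on S (\<lambda>s. norm (bracket (heis_evol K s X) B))"
  by (intro continuous_on_norm continuous_on_vector_derivative)
    (rule has_vector_derivative_bracket_heis_evol)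

lemma norm_bracket_heis_evol_le_ode_solution:
  fixes \<Gamma> :: "'j::finite \<Rightarrow> 'n::finite cmat" and g :: "real \<Rightarrow> 'j \<Rightarrow> real"
  assumes K: "K = (\<Sum>j\<in>UNIV. h j *\<^sub>R (ii * \<Gamma> j))"
    and skew: "\<And>j. skew_hermitian (ii * \<Gamma> j)"
    and norm_\<Gamma>: "\<And>j. norm (\<Gamma> j) \<le> 1"
    and commute: "\<And>i j. \<not> E i j \<Longrightarrow> bracket (\<Gamma> j) (\<Gamma> i) = 0"
    and ode: "\<And>i t. 0 \<le> t \<Longrightarrow>
       ((\<lambda>s. g s i) has_real_derivative (2 * (\<Sum>j\<in>{j. E i j}. \<bar>h j\<bar> * g t j))) (at t within {0..})"
    and init: "\<And>i. g 0 i = norm (bracket (\<Gamma> i) B)"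
    and "0 \<le> t"
  shows "norm (bracket (heis_evol K t (\<Gamma> i)) B) \<le> g t i"
proof -
  define c where "c i j = (if E i j then 2 * \<bar>h j\<bar> else 0)" for i j
  have sum_c: "(\<Sum>j\<in>{j. E i j}. 2 * \<bar>h j\<bar> * y j) = (\<Sum>j\<in>UNIV. c i j * y j)" for i y
    unfolding c_def by (simp add: if_distrib[where f="\<lambda>z. z * _"] sum.If_cases cong: if_cong)
  show ?thesis
  proof (rule dini_comparison[where c = c, OF \<open>0 \<le> t\<close>])
    show "0 \<le> c i j" for i j
      by (simp add: c_def)
    show "continuous_on {0..t} (\<lambda>s. norm (bracket (heis_evol K s (\<Gamma> i)) B))" for i
      by (rule continuous_on_norm_bracket_heis_evol)
    show "continuous_on {0..t} (\<lambda>s. g s i)" for i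
      using ode by (rule has_real_derivative_imp_continuous_on_Icc)
    show "dini_upper_le (\<lambda>s. norm (bracket (heis_evol K s (\<Gamma> i)) B)) s
        (\<Sum>j\<in>UNIV. c i j * norm (bracket (heis_evol K s (\<Gamma> j)) B))" for i s
    proof (rule dini_upper_le_mono)
      show "dini_upper_le (\<lambda>s. norm (bracket (heis_evol K s (\<Gamma> i)) B)) s
          (\<Sum>j\<in>{j. E i j}. 2 * norm (\<Gamma> i) * \<bar>h j\<bar> * norm (bracket (heis_evol K s (\<Gamma> j)) B))"
        by (rule dini_upper_le_norm_bracket_heis_evol[OF K skew]) (simp add: commute)
      show "(\<Sum>j\<in>{j. E i j}. 2 * norm (\<Gamma> i) * \<bar>h j\<bar> * norm (bracket (heis_evol K s (\<Gamma> j)) B))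
          \<le> (\<Sum>j\<in>UNIV. c i j * norm (bracket (heis_evol K s (\<Gamma> j)) B))"
        unfolding sum_c[symmetric] using norm_\<Gamma>[of i] by (intro sum_mono mult_right_mono) simp_all
    qed
    show "((\<lambda>s. g s i) has_real_derivative (\<Sum>j\<in>UNIV. c i j * g s j)) (at_right s)"
      if "0 \<le> s" for i s
      using DERIV_subset[OF ode[OF that], of "{s<..}"] that
      by (simp add: sum_c[symmetric] sum_distrib_left mult.assoc subset_eq)
  qed (simp add: init)
qed

lemma norm_bracket_heis_evol_diff_le_integral:
  fixes \<Gamma> :: "'j::finite \<Rightarrow> 'n::finite cmat" and g :: "real \<Rightarrow> 'j \<Rightarrow> real"
  assumes K: "K = (\<Sum>j\<in>UNIV. h j *\<^sub>R (ii * \<Gamma> j))"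
    and skew: "\<And>j. skew_hermitian (ii * \<Gamma> j)"
    and commute: "\<And>j. j \<notin> S \<Longrightarrow> bracket (\<Gamma> j) X = 0"
    and bound: "\<And>s j. 0 \<le> s \<Longrightarrow> norm (bracket (heis_evol K s (\<Gamma> j)) B) \<le> g s j"
    and cont_g: "\<And>j. continuous_on {0..t} (\<lambda>s. g s j)"
    and "0 \<le> t"
  shows "norm (bracket (heis_evol K t X) B) - norm (bracket X B)
    \<le> integral {0..t} (\<lambda>s. \<Sum>j\<in>S. 2 * norm X * \<bar>h j\<bar> * g s j)"
proof -
  have dini: "dini_upper_le (\<lambda>s. norm (bracket (heis_evol K s X) B)) s
      (\<Sum>j\<in>S. 2 * norm X * \<bar>h j\<bar> * g s j)" if "0 \<le> s" for s
  proof (rule dini_upper_le_mono)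
    show "dini_upper_le (\<lambda>s. norm (bracket (heis_evol K s X) B)) s
        (\<Sum>j\<in>S. 2 * norm X * \<bar>h j\<bar> * norm (bracket (heis_evol K s (\<Gamma> j)) B))"
      by (rule dini_upper_le_norm_bracket_heis_evol[OF K skew]) (rule commute)
    show "(\<Sum>j\<in>S. 2 * norm X * \<bar>h j\<bar> * norm (bracket (heis_evol K s (\<Gamma> j)) B))
        \<le> (\<Sum>j\<in>S. 2 * norm X * \<bar>h j\<bar> * g s j)"
      using bound[OF that] by (intro sum_mono mult_left_mono) simp_all
  qed
  have "norm (bracket (heis_evol K t X) B) - norm (bracket (heis_evol K 0 X) B)
      \<le> integral {0..t} (\<lambda>s. \<Sum>j\<in>S. 2 * norm X * \<bar>h j\<bar> * g s j)"
  proof (rule dini_integral_bound[OF \<open>0 \<le> t\<close> continuous_on_norm_bracket_heis_evol])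
    show "continuous_on {0..t} (\<lambda>s. \<Sum>j\<in>S. 2 * norm X * \<bar>h j\<bar> * g s j)"
      by (intro continuous_intros cont_g)
  qed (rule dini)
  then show ?thesis
    by simp
qed

theorem mainTheorem1:
  fixes h :: "'j::finite \<Rightarrow> real"
    and \<gamma> :: "'j \<Rightarrow> complex^'n^'n"
    and H B :: "complex^'n^'n"
    and g :: "real \<Rightarrow> 'j \<Rightarrow> real"
  assumes H_def: "H = (\<Sum>j\<in>UNIV. h j *\<^sub>R \<gamma> j)"
    and herm: "\<And>j. adjoint (\<gamma> j) = \<gamma> j"
    and unit_norm: "\<And>j. opnorm (\<gamma> j) = 1"
    and ode: "\<And>i t. t \<ge> 0 \<Longrightarrow>
       ((\<lambda>s. g s i) has_real_derivative
          (2 * (\<Sum>j\<in>{j. cedge \<gamma> i j}. \<bar>h j\<bar> * g t j))) (at t within {0..})"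
    and init: "\<And>i. g 0 i = opnorm (comm (\<gamma> i) B)"
  shows "(\<forall>t\<ge>0. \<forall>i. opnorm (comm (evol H t (\<gamma> i)) B) \<le> g t i)
    \<and> (\<forall>A t. t \<ge> 0 \<longrightarrow>
         opnorm (comm (evol H t A) B) - opnorm (comm A B)
           \<le> integral {0..t} (\<lambda>s. \<Sum>i\<in>supp_cg \<gamma> A. 2 * opnorm A * \<bar>h i\<bar> * g s i))"
proof -
  define \<Gamma> where "\<Gamma> j = cmat_of (\<gamma> j)" for j
  define K where "K = cmat_of (cscale \<i> H)"
  have K: "K = (\<Sum>j\<in>UNIV. h j *\<^sub>R (ii * \<Gamma> j))"
    by (simp add: K_def H_def \<Gamma>_def cmat_of_cscale_ii cmat_of_sum cmat_of_ring_hom sum_distrib_left)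
  have skew: "skew_hermitian (ii * \<Gamma> j)" for j
    unfolding \<Gamma>_def by (rule skew_hermitian_ii_mult[OF herm])
  have evolved: "opnorm (comm (evol H t M) B) = norm (bracket (heis_evol K t (cmat_of M)) (cmat_of B))"
    for t M
    by (simp add: opnorm_eq_norm_cmat_of cmat_of_comm cmat_of_evol K_def)
  have bound: "norm (bracket (heis_evol K t (\<Gamma> i)) (cmat_of B)) \<le> g t i" if "0 \<le> t" for t i
    using unit_norm init
    by (intro norm_bracket_heis_evol_le_ode_solution[OF K skew _ _ ode _ that])
      (auto simp: \<Gamma>_def cedge_def bracket_def comm_def cmat_of_comm opnorm_eq_norm_cmat_of
        cmat_of_ring_hom[symmetric])
  have growth: "opnorm (comm (evol H t A) B) - opnorm (comm A B)
      \<le> integral {0..t} (\<lambda>s. \<Sum>i\<in>supp_cg \<gamma> A. 2 * opnorm A * \<bar>h i\<bar> * g s i)" if "0 \<le> t" for A t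
    unfolding evolved opnorm_eq_norm_cmat_of[of A] opnorm_eq_norm_cmat_of[of "comm A B"] cmat_of_comm
    using ode
    by (intro norm_bracket_heis_evol_diff_le_integral[OF K skew _ bound _ that]
        has_real_derivative_imp_continuous_on_Icc)
      (auto simp: \<Gamma>_def supp_cg_def cmat_of_comm[symmetric])
  show ?thesis
    using bound growth by (simp add: evolved \<Gamma>_def)
qed

end
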